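(* Let $A=[a_{ij}]\in\{0,1\}^{N\times N}$ be the adjacency matrix of a static contact graph on nodes $\{1,\dots,N\}$ (with $a_{ii}=0$), and let $\beta_0>0$, $\delta>0$, $\kappa>0$ and $0\le\beta_a<\beta_0$. Let $(p_i(t),q_i(t))_{i=1}^N$ solve the SAIS system \[ \dot p_i=\beta_0(1-p_i-q_i)\sum_{j=1}^N a_{ij}p_j+\beta_a q_i\sum_{j=1}^N a_{ij}p_j-\delta p_i,\qquad \dot q_i=\kappa(1-p_i-q_i)\sum_{j=1}^N a_{ij}p_j-\beta_a q_i\sum_{j=1}^N a_{ij}p_j, \] for $i\in\{1,\dots,N\}$, with initial data at time $t_0$ that are probabilities ($p_i(t_0),q_i(t_0)\ge 0$, $p_i(t_0)+q_i(t_0)\le 1$), and let $(p_i'(t))_{i=1}^N$ solve the SIS (N-intertwined) system \[ \dot p_i'=\beta_0(1-p_i')\sum_{j=1}^N a_{ij}p_j'-\delta p_i',\qquad i\in\{1,\dots,N\}, \] with the same initial conditions $p_i'(t_0)=p_i(t_0)$ for all $i$. Then $p_i(t)\le p_i'(t)$ for all $i\in\{1,\dots,N\}$ and all $t\in[t_0,\infty)$.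
   Context: $p_i$ and $q_i$ are the (mean-field) probabilities that individual $i$ is infected and alert, respectively; $1-p_i-q_i$ is the probability it is susceptible. $a_{ij}=1$ if individual $j$ is a neighbor of individual $i$ (i.e. $i$ can be directly infected by $j$), and $a_{ij}=0$ otherwise. $\beta_0$ is the infection rate of a susceptible individual, $\beta_a$ the infection rate of an alert individual, $\kappa$ the alerting rate, $\delta$ the curing rate. *)

theory Defs
  imports "HOL-Analysis.Analysis"
begin

text \<open>Nodes are indexed by 0..N-1 (the paper uses 1..N). The adjacency matrix is
  a function a :: nat => nat => real with entries in {0,1} on the index range.\<close>

definition adjacency_matrix :: "nat \<Rightarrow> (nat \<Rightarrow> nat \<Rightarrow> real) \<Rightarrow> bool" where
  "adjacency_matrix N a \<longleftrightarrow>
     (\<forall>i<N. \<forall>j<N. a i j = 0 \<or> a i j = 1) \<and> (\<forall>i<N. a i i = 0)"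

definition SAIS_solution ::
  "nat \<Rightarrow> (nat \<Rightarrow> nat \<Rightarrow> real) \<Rightarrow> real \<Rightarrow> real \<Rightarrow> real \<Rightarrow> real \<Rightarrow> real
     \<Rightarrow> (nat \<Rightarrow> real \<Rightarrow> real) \<Rightarrow> (nat \<Rightarrow> real \<Rightarrow> real) \<Rightarrow> bool" where
  "SAIS_solution N a \<beta>\<^sub>0 \<beta>\<^sub>a \<kappa> \<delta> t\<^sub>0 p q \<longleftrightarrow>
     (\<forall>i<N. \<forall>t\<ge>t\<^sub>0.
        ((p i) has_real_derivative
           (\<beta>\<^sub>0 * (1 - p i t - q i t) * (\<Sum>j<N. a i j * p j t)
            + \<beta>\<^sub>a * q i t * (\<Sum>j<N. a i j * p j t) - \<delta> * p i t)) (at t within {t\<^sub>0..}) \<and>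
        ((q i) has_real_derivative
           (\<kappa> * (1 - p i t - q i t) * (\<Sum>j<N. a i j * p j t)
            - \<beta>\<^sub>a * q i t * (\<Sum>j<N. a i j * p j t))) (at t within {t\<^sub>0..}))"

definition SIS_solution ::
  "nat \<Rightarrow> (nat \<Rightarrow> nat \<Rightarrow> real) \<Rightarrow> real \<Rightarrow> real \<Rightarrow> real
     \<Rightarrow> (nat \<Rightarrow> real \<Rightarrow> real) \<Rightarrow> bool" where
  "SIS_solution N a \<beta>\<^sub>0 \<delta> t\<^sub>0 p' \<longleftrightarrow>
     (\<forall>i<N. \<forall>t\<ge>t\<^sub>0.
        ((p' i) has_real_derivative
           (\<beta>\<^sub>0 * (1 - p' i t) * (\<Sum>j<N. a i j * p' j t) - \<delta> * p' i t)) (at t within {t\<^sub>0..}))"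

end

theory Submission
  imports Defs
begin

text \<open>The argument rests on one comparison principle for a finite family of functions on
  \<open>[t\<^sub>0, T]\<close>: if none is positive at \<open>t\<^sub>0\<close> and a member that equals the current maximum
  \<open>c > 0\<close> of the family grows at rate at most \<open>L c\<close>, none ever becomes positive (race the family
  against the barrier \<open>\<epsilon> e\<^bsup>(L+1)(t-t\<^sub>0)\<^esup>\<close> and let \<open>\<epsilon> \<rightarrow> 0\<close>).
  Applied to the negated compartment probabilities \<open>-p\<^sub>i, -q\<^sub>i, p\<^sub>i + q\<^sub>i - 1\<close> it shows that the
  SAIS dynamics stay in the probability simplex. Applied to \<open>p\<^sub>i - p\<^sub>i'\<close> it gives the theorem:
  at a node where this difference is maximal, the SAIS infection rate falls short of the SIS one
  by \<open>(\<beta>\<^sub>0 - \<beta>\<^sub>a) q\<^sub>i \<Sum>\<^sub>j a\<^sub>i\<^sub>j p\<^sub>j \<ge> 0\<close> (alert nodes are infected more slowly), and all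
  remaining terms are bounded by a multiple of the difference.\<close>

lemma weighted_sum_le_card:
  fixes w x :: "'a \<Rightarrow> real"
  assumes "\<And>j. j \<in> A \<Longrightarrow> 0 \<le> w j \<and> w j \<le> 1" and "\<And>j. j \<in> A \<Longrightarrow> x j \<le> c" and "0 \<le> c"
  shows "(\<Sum>j\<in>A. w j * x j) \<le> of_nat (card A) * c"
proof (rule sum_bounded_above)
  fix j assume "j \<in> A"
  with assms show "w j * x j \<le> c"
    by (cases "x j \<ge> 0") (auto intro: order_trans[OF mult_left_le_one_le] order_trans[OF mult_nonneg_nonpos])
qed

lemma weighted_sum_ge_card:
  fixes w x :: "'a \<Rightarrow> real"
  assumes "\<And>j. j \<in> A \<Longrightarrow> 0 \<le> w j \<and> w j \<le> 1" and "\<And>j. j \<in> A \<Longrightarrow> -c \<le> x j" and "0 \<le> c"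
  shows "- (of_nat (card A) * c) \<le> (\<Sum>j\<in>A. w j * x j)"
proof -
  have "- (\<Sum>j\<in>A. w j * x j) \<le> of_nat (card A) * c"
    using weighted_sum_le_card[of A w "\<lambda>j. - x j" c] assms by (force simp: sum_negf)
  then show ?thesis by linarith
qed

lemma abs_weighted_sum_le_card:
  fixes w x :: "'a \<Rightarrow> real"
  assumes "\<And>j. j \<in> A \<Longrightarrow> 0 \<le> w j \<and> w j \<le> 1" and "\<And>j. j \<in> A \<Longrightarrow> \<bar>x j\<bar> \<le> c"
  shows "\<bar>\<Sum>j\<in>A. w j * x j\<bar> \<le> of_nat (card A) * c"
proof (cases "A = {}")
  case False
  then obtain j where "j \<in> A" by blast
  then have "0 \<le> c" using assms(2) by force
  have "\<And>j. j \<in> A \<Longrightarrow> x j \<le> c" "\<And>j. j \<in> A \<Longrightarrow> -c \<le> x j"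
    using assms(2) by (force simp: abs_le_iff)+
  with \<open>0 \<le> c\<close> assms(1) show ?thesis
    using weighted_sum_le_card[of A w x c] weighted_sum_ge_card[of A w c x]
    by (simp add: abs_le_iff)
qed simp

lemma mult_ge_neg_of_bounds:
  fixes x y c d K :: real
  assumes "-c \<le> x" "-d \<le> y" "\<bar>x\<bar> \<le> K" "\<bar>y\<bar> \<le> K" "0 \<le> c" "0 \<le> d"
  shows "- (K * (c + d)) \<le> x * y"
proof -
  have "- (c * K) \<le> x * y" if "x < 0" "0 \<le> y"
    using mult_mono[of "-x" c y K] that assms by simp
  moreover have "- (K * d) \<le> x * y" if "0 \<le> x" "y < 0"
    using mult_mono[of x K "-y" d] that assms by simp
  moreover have "0 \<le> x * y" if "(0 \<le> x \<and> 0 \<le> y) \<or> (x < 0 \<and> y < 0)"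
    using that by (auto simp: zero_le_mult_iff)
  moreover have "0 \<le> K * c" "0 \<le> K * d" using assms by auto
  ultimately show ?thesis by (smt (verit) distrib_left mult.commute)
qed

lemma first_touching_time:
  fixes u :: "'i \<Rightarrow> real \<Rightarrow> real" and g :: "real \<Rightarrow> real"
  assumes fin: "finite I"
    and cont: "\<And>k. k \<in> I \<Longrightarrow> continuous_on {t0..T} (u k)" and gcont: "continuous_on {t0..T} g"
    and start: "\<And>k. k \<in> I \<Longrightarrow> u k t0 < g t0"
    and reach: "k0 \<in> I" "s0 \<in> {t0..T}" "g s0 \<le> u k0 s0"
  obtains k t1 where "k \<in> I" "t0 < t1" "t1 \<le> T" "u k t1 = g t1"
    "\<And>j. j \<in> I \<Longrightarrow> u j t1 \<le> g t1"
    "\<And>j t. j \<in> I \<Longrightarrow> t0 \<le> t \<Longrightarrow> t < t1 \<Longrightarrow> u j t < g t"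
proof -
  define Z where "Z = (\<Union>k\<in>I. {t \<in> {t0..T}. g t \<le> u k t})"
  have "Z \<noteq> {}" using reach unfolding Z_def by blast
  moreover have bdd: "bdd_below Z" unfolding Z_def by (rule bdd_belowI[of _ t0]) auto
  moreover have "closed Z" unfolding Z_def
    by (intro closed_UN fin ballI continuous_on_closed_Collect_le gcont cont) auto
  ultimately have "Inf Z \<in> Z" by (rule closed_contains_Inf)
  then obtain k where k: "k \<in> I" "Inf Z \<in> {t0..T}" "g (Inf Z) \<le> u k (Inf Z)"
    unfolding Z_def by blast
  have t0_less: "t0 < Inf Z"
    using k start[OF k(1)] by (cases "Inf Z = t0") auto
  have before: "u j t < g t" if "j \<in> I" "t0 \<le> t" "t < Inf Z" for j t
  proof (rule ccontr)
    assume "\<not> u j t < g t"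
    then have "t \<in> Z" unfolding Z_def using that k(2) by (auto simp: not_less)
    with cInf_lower[OF _ bdd] \<open>t < Inf Z\<close> show False by force
  qed
  have at: "u j (Inf Z) \<le> g (Inf Z)" if j: "j \<in> I" for j
  proof -
    have "{t0..<Inf Z} \<subseteq> {t \<in> {t0..T}. u j t \<le> g t}"
      using before[OF j] k(2) by (auto simp: less_imp_le)
    moreover have "closed {t \<in> {t0..T}. u j t \<le> g t}"
      by (intro continuous_on_closed_Collect_le gcont cont j) auto
    ultimately have "closure {t0..<Inf Z} \<subseteq> {t \<in> {t0..T}. u j t \<le> g t}"
      by (rule closure_minimal)
    then show ?thesis using t0_less by (auto simp: subset_iff)
  qed
  show thesis
    using that[OF k(1) t0_less _ _ at before] k at[OF k(1)] by auto
qed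

lemma nonpos_by_comparison:
  fixes u u' :: "'i \<Rightarrow> real \<Rightarrow> real"
  assumes fin: "finite I"
    and deriv: "\<And>k t. k \<in> I \<Longrightarrow> t \<in> {t0..T} \<Longrightarrow>
                  (u k has_real_derivative u' k t) (at t within {t0..T})"
    and init: "\<And>k. k \<in> I \<Longrightarrow> u k t0 \<le> 0"
    and touching: "\<And>k t c. k \<in> I \<Longrightarrow> t0 < t \<Longrightarrow> t \<le> T \<Longrightarrow> 0 < c \<Longrightarrow> u k t = c \<Longrightarrow>
                  (\<forall>j\<in>I. u j t \<le> c) \<Longrightarrow> u' k t \<le> L * c"
    and k: "k \<in> I" and t: "t \<in> {t0..T}"
  shows "u k t \<le> 0"
proof -
  have below_barrier: "u k s < \<epsilon> * exp ((L + 1) * (s - t0))"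
    if "0 < \<epsilon>" "k \<in> I" "s \<in> {t0..T}" for \<epsilon> k s
  proof (rule ccontr)
    define g where "g s = \<epsilon> * exp ((L + 1) * (s - t0))" for s
    have g_pos: "0 < g s" for s unfolding g_def using \<open>0 < \<epsilon>\<close> by simp
    assume "\<not> ?thesis"
    then have reach: "g s \<le> u k s" unfolding g_def by simp
    have cont: "continuous_on {t0..T} (u j)" if "j \<in> I" for j
      using deriv that by (intro DERIV_continuous_on) auto
    have g_cont: "continuous_on {t0..T} g" unfolding g_def by (intro continuous_intros)
    have start: "u j t0 < g t0" if "j \<in> I" for j using init[OF that] g_pos[of t0] by simp
    obtain k1 t1 where k1: "k1 \<in> I" "t0 < t1" "t1 \<le> T" "u k1 t1 = g t1"
      and all_le: "\<And>j. j \<in> I \<Longrightarrow> u j t1 \<le> g t1"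
      and before: "\<And>j t. j \<in> I \<Longrightarrow> t0 \<le> t \<Longrightarrow> t < t1 \<Longrightarrow> u j t < g t"
      using first_touching_time[where u = u and g = g, OF fin cont g_cont start
          \<open>k \<in> I\<close> \<open>s \<in> {t0..T}\<close> reach]
      by blast
    have "u' k1 t1 \<le> L * g t1"
      using touching[OF k1(1,2,3) g_pos k1(4)] all_le by blast
    then have neg: "u' k1 t1 - (L + 1) * g t1 < 0" using g_pos[of t1] by (simp add: algebra_simps)
    have "((\<lambda>s. u k1 s - g s) has_real_derivative u' k1 t1 - (L + 1) * g t1) (at t1 within {t0..T})"
      unfolding g_def using deriv k1 by (auto intro!: derivative_eq_intros)
    from has_real_derivative_neg_dec_left[OF this neg] obtain d where d: "0 < d"
      "\<And>h. 0 < h \<Longrightarrow> t1 - h \<in> {t0..T} \<Longrightarrow> h < d \<Longrightarrow> u k1 t1 - g t1 < u k1 (t1 - h) - g (t1 - h)"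
      by blast
    define h where "h = min (d / 2) (t1 - t0)"
    have "u k1 t1 - g t1 < u k1 (t1 - h) - g (t1 - h)"
      using d k1 unfolding h_def by (intro d(2)) auto
    moreover have "u k1 (t1 - h) < g (t1 - h)"
      using before[OF k1(1)] d k1 unfolding h_def by auto
    ultimately show False using k1(4) by linarith
  qed
  show ?thesis
  proof (rule ccontr)
    assume "\<not> u k t \<le> 0"
    then have "0 < u k t / exp ((L + 1) * (t - t0))" by simp
    from below_barrier[OF this k t] show False by simp
  qed
qed

lemma sais_simplex_rate_bounds:
  fixes x y S c K n :: real
  assumes rates: "0 \<le> \<beta>\<^sub>0" "0 \<le> \<beta>\<^sub>a" "0 \<le> \<kappa>" "0 \<le> \<delta>"
    and "0 < c" "1 \<le> K" "0 \<le> n"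
    and lower: "-c \<le> x" "-c \<le> y" "-c \<le> 1 - x - y" "- (n * c) \<le> S"
    and bounds: "\<bar>1 - x - y\<bar> \<le> K" "\<bar>y\<bar> \<le> K" "\<bar>S\<bar> \<le> K"
  shows "x = -c \<Longrightarrow> - (\<beta>\<^sub>0 * (1 - x - y) * S + \<beta>\<^sub>a * y * S - \<delta> * x)
                       \<le> (\<beta>\<^sub>0 + \<beta>\<^sub>a + \<kappa> + \<delta>) * K * (n + 1) * c"
    and "y = -c \<Longrightarrow> - (\<kappa> * (1 - x - y) * S - \<beta>\<^sub>a * y * S)
                       \<le> (\<beta>\<^sub>0 + \<beta>\<^sub>a + \<kappa> + \<delta>) * K * (n + 1) * c"
    and "1 - x - y = -c \<Longrightarrow> (\<beta>\<^sub>0 * (1 - x - y) * S + \<beta>\<^sub>a * y * S - \<delta> * x)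
                              + (\<kappa> * (1 - x - y) * S - \<beta>\<^sub>a * y * S)
                       \<le> (\<beta>\<^sub>0 + \<beta>\<^sub>a + \<kappa> + \<delta>) * K * (n + 1) * c"
proof -
  define M where "M = K * (n + 1) * c"
  have M: "c \<le> M" "c * K \<le> M"
    using \<open>0 < c\<close> \<open>1 \<le> K\<close> \<open>0 \<le> n\<close> mult_mono[of 1 K 1 "n + 1"] unfolding M_def
    by (auto simp: mult.assoc intro: order_trans[OF _ mult_right_mono])
  have sS: "-M \<le> (1 - x - y) * S" and yS: "-M \<le> y * S"
    using mult_ge_neg_of_bounds[OF lower(3,4)] mult_ge_neg_of_bounds[OF lower(2,4)] bounds
      \<open>0 < c\<close> \<open>0 \<le> n\<close> unfolding M_def by (simp_all add: algebra_simps)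
  have cS: "c * (- S) \<le> M" using M bounds \<open>0 < c\<close> by (smt (verit) mult_left_mono)
  have expand: "(\<beta>\<^sub>0 + \<beta>\<^sub>a + \<kappa> + \<delta>) * K * (n + 1) * c = \<beta>\<^sub>0 * M + \<beta>\<^sub>a * M + \<kappa> * M + \<delta> * M"
    unfolding M_def by (simp add: algebra_simps)
  have M0: "0 \<le> M" using M \<open>0 < c\<close> by linarith
  have scaled: "- (\<beta>\<^sub>0 * M) \<le> \<beta>\<^sub>0 * ((1 - x - y) * S)" "- (\<kappa> * M) \<le> \<kappa> * ((1 - x - y) * S)"
    "- (\<beta>\<^sub>a * M) \<le> \<beta>\<^sub>a * (y * S)" "\<beta>\<^sub>a * (c * (- S)) \<le> \<beta>\<^sub>a * M"
    "\<beta>\<^sub>0 * (c * (- S)) \<le> \<beta>\<^sub>0 * M" "\<kappa> * (c * (- S)) \<le> \<kappa> * M" "\<delta> * c \<le> \<delta> * M"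
    using mult_left_mono[OF sS] mult_left_mono[OF yS] mult_left_mono[OF cS] mult_left_mono[OF M(1)]
      rates by auto
  have nonneg: "0 \<le> \<beta>\<^sub>0 * M" "0 \<le> \<beta>\<^sub>a * M" "0 \<le> \<kappa> * M" "0 \<le> \<delta> * M" "0 \<le> \<delta> * c"
    using M0 rates \<open>0 < c\<close> by auto
  show "x = -c \<Longrightarrow> - (\<beta>\<^sub>0 * (1 - x - y) * S + \<beta>\<^sub>a * y * S - \<delta> * x)
                       \<le> (\<beta>\<^sub>0 + \<beta>\<^sub>a + \<kappa> + \<delta>) * K * (n + 1) * c"
    using expand scaled nonneg by (simp add: mult.assoc)
  show "y = -c \<Longrightarrow> - (\<kappa> * (1 - x - y) * S - \<beta>\<^sub>a * y * S)
                       \<le> (\<beta>\<^sub>0 + \<beta>\<^sub>a + \<kappa> + \<delta>) * K * (n + 1) * c"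
    using expand scaled nonneg by (simp add: mult.assoc)
  show "1 - x - y = -c \<Longrightarrow> (\<beta>\<^sub>0 * (1 - x - y) * S + \<beta>\<^sub>a * y * S - \<delta> * x)
                              + (\<kappa> * (1 - x - y) * S - \<beta>\<^sub>a * y * S)
                       \<le> (\<beta>\<^sub>0 + \<beta>\<^sub>a + \<kappa> + \<delta>) * K * (n + 1) * c"
  proof -
    assume susc: "1 - x - y = -c"
    have "(\<beta>\<^sub>0 * (1 - x - y) * S + \<beta>\<^sub>a * y * S - \<delta> * x) + (\<kappa> * (1 - x - y) * S - \<beta>\<^sub>a * y * S)
               = \<beta>\<^sub>0 * (c * (- S)) + \<kappa> * (c * (- S)) - \<delta> * x"
      unfolding susc by (simp add: algebra_simps)
    moreover have "- (\<delta> * x) \<le> \<delta> * c" using lower(1) rates mult_left_mono[of "-x" c \<delta>] by simp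
    ultimately show ?thesis using expand scaled nonneg by linarith
  qed
qed

lemma sais_sis_rate_gap:
  fixes x x' y S S' c n B :: real
  assumes "0 \<le> \<beta>\<^sub>a" "\<beta>\<^sub>a \<le> \<beta>\<^sub>0" "0 \<le> \<delta>" "0 < c"
    and "x - x' = c" "0 \<le> x" "x \<le> 1" "0 \<le> y" "0 \<le> S"
    and "S - S' \<le> n * c" "\<bar>S'\<bar> \<le> n * B" "0 \<le> n"
  shows "(\<beta>\<^sub>0 * (1 - x - y) * S + \<beta>\<^sub>a * y * S - \<delta> * x) - (\<beta>\<^sub>0 * (1 - x') * S' - \<delta> * x')
         \<le> \<beta>\<^sub>0 * n * (1 + B) * c"
proof -
  define E where "E = (1 - x) * (S - S') + c * (- S')"
  have gap: "(\<beta>\<^sub>0 * (1 - x - y) * S + \<beta>\<^sub>a * y * S - \<delta> * x) - (\<beta>\<^sub>0 * (1 - x') * S' - \<delta> * x')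
        = \<beta>\<^sub>0 * E - (\<beta>\<^sub>0 - \<beta>\<^sub>a) * (y * S) - \<delta> * c"
    using \<open>x - x' = c\<close> unfolding E_def by (simp add: algebra_simps)
  have "(1 - x) * (S - S') \<le> n * c"
    using assms mult_left_mono[of "S - S'" "n * c" "1 - x"] mult_right_mono[of "1 - x" 1 "n * c"]
    by simp
  moreover have "c * (- S') \<le> c * (n * B)"
    using assms by (intro mult_left_mono) auto
  ultimately have "E \<le> n * (1 + B) * c" unfolding E_def by (simp add: algebra_simps)
  then have "\<beta>\<^sub>0 * E \<le> \<beta>\<^sub>0 * (n * (1 + B) * c)"
    using assms by (intro mult_left_mono) auto
  moreover have "0 \<le> (\<beta>\<^sub>0 - \<beta>\<^sub>a) * (y * S)" "0 \<le> \<delta> * c" using assms by simp_all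
  ultimately show ?thesis unfolding gap by (simp add: mult.assoc)
qed

datatype compartment = Infected | Alert | Susceptible

lemma sais_simplex_invariant:
  fixes a :: "nat \<Rightarrow> nat \<Rightarrow> real" and p q :: "nat \<Rightarrow> real \<Rightarrow> real"
  assumes a: "\<And>i j. i < N \<Longrightarrow> j < N \<Longrightarrow> 0 \<le> a i j \<and> a i j \<le> 1"
    and rates: "0 \<le> \<beta>\<^sub>0" "0 \<le> \<beta>\<^sub>a" "0 \<le> \<kappa>" "0 \<le> \<delta>"
    and B: "0 \<le> B" "\<And>j s. j < N \<Longrightarrow> s \<in> {t\<^sub>0..T} \<Longrightarrow> \<bar>p j s\<bar> \<le> B \<and> \<bar>q j s\<bar> \<le> B"
    and dp: "\<And>i s. i < N \<Longrightarrow> s \<in> {t\<^sub>0..T} \<Longrightarrow> ((p i) has_real_derivative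
           \<beta>\<^sub>0 * (1 - p i s - q i s) * (\<Sum>j<N. a i j * p j s)
            + \<beta>\<^sub>a * q i s * (\<Sum>j<N. a i j * p j s) - \<delta> * p i s) (at s within {t\<^sub>0..T})"
    and dq: "\<And>i s. i < N \<Longrightarrow> s \<in> {t\<^sub>0..T} \<Longrightarrow> ((q i) has_real_derivative
           \<kappa> * (1 - p i s - q i s) * (\<Sum>j<N. a i j * p j s)
            - \<beta>\<^sub>a * q i s * (\<Sum>j<N. a i j * p j s)) (at s within {t\<^sub>0..T})"
    and init: "\<And>i. i < N \<Longrightarrow> 0 \<le> p i t\<^sub>0 \<and> 0 \<le> q i t\<^sub>0 \<and> p i t\<^sub>0 + q i t\<^sub>0 \<le> 1"
    and "i < N" "s \<in> {t\<^sub>0..T}"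
  shows "0 \<le> p i s \<and> 0 \<le> q i s \<and> p i s + q i s \<le> 1"
proof -
  define S where "S i s = (\<Sum>j<N. a i j * p j s)" for i s
  define Dp where "Dp i s = \<beta>\<^sub>0 * (1 - p i s - q i s) * S i s + \<beta>\<^sub>a * q i s * S i s - \<delta> * p i s" for i s
  define Dq where "Dq i s = \<kappa> * (1 - p i s - q i s) * S i s - \<beta>\<^sub>a * q i s * S i s" for i s
  define prob where "prob k s = (case k of (i, Infected) \<Rightarrow> p i s | (i, Alert) \<Rightarrow> q i s
                                   | (i, Susceptible) \<Rightarrow> 1 - p i s - q i s)" for k s
  define prob' where "prob' k s = (case k of (i, Infected) \<Rightarrow> Dp i s | (i, Alert) \<Rightarrow> Dq i s
                                   | (i, Susceptible) \<Rightarrow> - Dp i s - Dq i s)" for k s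
  define I where "I = {..<N} \<times> {Infected, Alert, Susceptible}"
  define K where "K = 1 + 2 * B + real N * B"
  have K: "1 \<le> K" unfolding K_def using B(1) by simp
  have nonneg: "- prob k s \<le> 0" if "k \<in> I" "s \<in> {t\<^sub>0..T}" for k s
  proof (rule nonpos_by_comparison[where u' = "\<lambda>k s. - prob' k s", OF _ _ _ _ that])
    show "finite I" unfolding I_def by simp
  next
    fix k s assume "k \<in> I" "s \<in> {t\<^sub>0..T}"
    then obtain i m where k: "k = (i, m)" "i < N" unfolding I_def by blast
    note dp_i = dp[OF k(2) \<open>s \<in> _\<close>, folded S_def, folded Dp_def]
      and dq_i = dq[OF k(2) \<open>s \<in> _\<close>, folded S_def, folded Dq_def]
    show "((\<lambda>s. - prob k s) has_real_derivative - prob' k s) (at s within {t\<^sub>0..T})"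
      unfolding prob_def prob'_def k
      by (cases m) (auto intro!: derivative_eq_intros dp_i dq_i)
  next
    fix k assume "k \<in> I"
    then obtain i m where "k = (i, m)" "i < N" unfolding I_def by blast
    then show "- prob k t\<^sub>0 \<le> 0" unfolding prob_def using init[of i] by (cases m) auto
  next
    fix k s c assume "k \<in> I" "t\<^sub>0 < s" "s \<le> T" "0 < c" and touch: "- prob k s = c"
      and all_le: "\<forall>j\<in>I. - prob j s \<le> c"
    then obtain i m where k: "k = (i, m)" "i < N" unfolding I_def by blast
    have s: "s \<in> {t\<^sub>0..T}" using \<open>t\<^sub>0 < s\<close> \<open>s \<le> T\<close> by simp
    have lower: "-c \<le> p j s" "-c \<le> q j s" "-c \<le> 1 - p j s - q j s" if "j < N" for j
      using all_le that unfolding I_def prob_def by force+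
    have S_lower: "- (real N * c) \<le> S i s"
      using weighted_sum_ge_card[of "{..<N}" "a i" c "\<lambda>j. p j s"] a k(2) lower \<open>0 < c\<close>
      unfolding S_def by simp
    have S_abs: "\<bar>S i s\<bar> \<le> K"
      using abs_weighted_sum_le_card[of "{..<N}" "a i" "\<lambda>j. p j s" B] a k(2) B s
      unfolding S_def K_def by simp
    have pq_abs: "\<bar>1 - p i s - q i s\<bar> \<le> K" "\<bar>q i s\<bar> \<le> K"
      using B(2)[OF k(2) s] mult_nonneg_nonneg[OF of_nat_0_le_iff B(1), of N] unfolding K_def
      by (smt (verit))+
    note rate_bounds =
      sais_simplex_rate_bounds[OF rates \<open>0 < c\<close> K _ lower[OF k(2)] S_lower pq_abs S_abs]
    show "- prob' k s \<le> (\<beta>\<^sub>0 + \<beta>\<^sub>a + \<kappa> + \<delta>) * K * (real N + 1) * c"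
      using touch rate_bounds unfolding prob_def prob'_def Dp_def Dq_def k
      by (cases m) auto
  qed
  have "0 \<le> prob (i, m) s" for m
    using nonneg[of "(i, m)" s] \<open>i < N\<close> \<open>s \<in> _\<close> unfolding I_def by (cases m) auto
  from this[of Infected] this[of Alert] this[of Susceptible] show ?thesis
    unfolding prob_def by simp
qed

lemma adjacency_matrix_entry_bounds:
  assumes "adjacency_matrix N a" "i < N" "j < N"
  shows "0 \<le> a i j \<and> a i j \<le> 1"
  using assms unfolding adjacency_matrix_def by force

lemma uniform_bound_continuous_family:
  fixes f :: "'i \<Rightarrow> real \<Rightarrow> real"
  assumes "finite I" "compact S" "\<And>j. j \<in> I \<Longrightarrow> continuous_on S (f j)"
  obtains B where "0 \<le> B" "\<And>j s. j \<in> I \<Longrightarrow> s \<in> S \<Longrightarrow> \<bar>f j s\<bar> \<le> B"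
proof -
  have "bounded (\<Union>j\<in>I. f j ` S)"
    using assms by (auto intro!: bounded_UN compact_imp_bounded compact_continuous_image)
  then obtain B where "\<And>x. x \<in> (\<Union>j\<in>I. f j ` S) \<Longrightarrow> norm x \<le> B"
    unfolding bounded_iff by blast
  then show thesis by (intro that[of "max B 0"]) force+
qed

lemma sais_le_sis:
  fixes a :: "nat \<Rightarrow> nat \<Rightarrow> real" and p q p' :: "nat \<Rightarrow> real \<Rightarrow> real"
  assumes a: "\<And>i j. i < N \<Longrightarrow> j < N \<Longrightarrow> 0 \<le> a i j \<and> a i j \<le> 1"
    and rates: "0 \<le> \<beta>\<^sub>a" "\<beta>\<^sub>a \<le> \<beta>\<^sub>0" "0 \<le> \<delta>"
    and simplex: "\<And>j s. j < N \<Longrightarrow> s \<in> {t\<^sub>0..T} \<Longrightarrow> 0 \<le> p j s \<and> 0 \<le> q j s \<and> p j s + q j s \<le> 1"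
    and B: "0 \<le> B" "\<And>j s. j < N \<Longrightarrow> s \<in> {t\<^sub>0..T} \<Longrightarrow> \<bar>p' j s\<bar> \<le> B"
    and dp: "\<And>i s. i < N \<Longrightarrow> s \<in> {t\<^sub>0..T} \<Longrightarrow> ((p i) has_real_derivative
           \<beta>\<^sub>0 * (1 - p i s - q i s) * (\<Sum>j<N. a i j * p j s)
            + \<beta>\<^sub>a * q i s * (\<Sum>j<N. a i j * p j s) - \<delta> * p i s) (at s within {t\<^sub>0..T})"
    and dp': "\<And>i s. i < N \<Longrightarrow> s \<in> {t\<^sub>0..T} \<Longrightarrow> ((p' i) has_real_derivative
           \<beta>\<^sub>0 * (1 - p' i s) * (\<Sum>j<N. a i j * p' j s) - \<delta> * p' i s) (at s within {t\<^sub>0..T})"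
    and init: "\<And>i. i < N \<Longrightarrow> p i t\<^sub>0 \<le> p' i t\<^sub>0"
    and "i < N" "t \<in> {t\<^sub>0..T}"
  shows "p i t \<le> p' i t"
proof -
  define S where "S p i s = (\<Sum>j<N. a i j * p j s)" for p :: "nat \<Rightarrow> real \<Rightarrow> real" and i s
  define gap where "gap i s = (\<beta>\<^sub>0 * (1 - p i s - q i s) * S p i s + \<beta>\<^sub>a * q i s * S p i s - \<delta> * p i s)
                     - (\<beta>\<^sub>0 * (1 - p' i s) * S p' i s - \<delta> * p' i s)" for i s
  have "p i t - p' i t \<le> 0"
  proof (rule nonpos_by_comparison[where I = "{..<N}" and u = "\<lambda>i s. p i s - p' i s"
                                          and L = "\<beta>\<^sub>0 * real N * (1 + B)" and u' = gap])
    fix i c s assume i: "i \<in> {..<N}" and s: "t\<^sub>0 < s" "s \<le> T" and "0 < c"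
      and touch: "p i s - p' i s = c" and all_le: "\<forall>j\<in>{..<N}. p j s - p' j s \<le> c"
    have "S p i s - S p' i s = (\<Sum>j<N. a i j * (p j s - p' j s))"
      unfolding S_def by (simp add: sum_subtractf right_diff_distrib)
    also have "\<dots> \<le> real N * c"
      using weighted_sum_le_card[of "{..<N}" "a i"] a i all_le \<open>0 < c\<close> by simp
    finally have "S p i s - S p' i s \<le> real N * c" .
    moreover have "0 \<le> S p i s"
      unfolding S_def using a i simplex s by (intro sum_nonneg mult_nonneg_nonneg) auto
    moreover have "\<bar>S p' i s\<bar> \<le> real N * B"
      using abs_weighted_sum_le_card[of "{..<N}" "a i"] a i B s unfolding S_def by simp
    ultimately show "gap i s \<le> \<beta>\<^sub>0 * real N * (1 + B) * c"
      unfolding gap_def using sais_sis_rate_gap[OF rates \<open>0 < c\<close> touch] simplex[of i s] i s by simp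
  qed (use dp dp' init \<open>i < N\<close> \<open>t \<in> _\<close> in \<open>auto intro!: derivative_eq_intros simp: gap_def S_def\<close>)
  then show ?thesis by simp
qed

theorem theorem1:
  fixes N :: nat and a :: "nat \<Rightarrow> nat \<Rightarrow> real"
    and \<beta>\<^sub>0 \<beta>\<^sub>a \<kappa> \<delta> t\<^sub>0 :: real
    and p q p' :: "nat \<Rightarrow> real \<Rightarrow> real"
  assumes "adjacency_matrix N a"
    and "\<beta>\<^sub>0 > 0" and "\<delta> > 0" and "\<kappa> > 0" and "0 \<le> \<beta>\<^sub>a" and "\<beta>\<^sub>a < \<beta>\<^sub>0"
    and "SAIS_solution N a \<beta>\<^sub>0 \<beta>\<^sub>a \<kappa> \<delta> t\<^sub>0 p q"
    and "\<forall>i<N. p i t\<^sub>0 \<ge> 0 \<and> q i t\<^sub>0 \<ge> 0 \<and> p i t\<^sub>0 + q i t\<^sub>0 \<le> 1"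
    and "SIS_solution N a \<beta>\<^sub>0 \<delta> t\<^sub>0 p'"
    and "\<forall>i<N. p' i t\<^sub>0 = p i t\<^sub>0"
  shows "\<forall>i<N. \<forall>t\<ge>t\<^sub>0. p i t \<le> p' i t"
proof (intro allI impI)
  fix i T assume "i < N" "t\<^sub>0 \<le> T"
  note a = adjacency_matrix_entry_bounds[OF assms(1)]
  have restrict: "(f has_real_derivative f') (at s within {t\<^sub>0..T})"
    if "(f has_real_derivative f') (at s within {t\<^sub>0..})" for f f' s
    using that by (rule has_field_derivative_subset) auto
  note dp = restrict[OF assms(7)[unfolded SAIS_solution_def, rule_format, THEN conjunct1]]
    and dq = restrict[OF assms(7)[unfolded SAIS_solution_def, rule_format, THEN conjunct2]]
    and dp' = restrict[OF assms(9)[unfolded SIS_solution_def, rule_format]]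
  have cont: "continuous_on {t\<^sub>0..T} (p j)" "continuous_on {t\<^sub>0..T} (q j)"
    "continuous_on {t\<^sub>0..T} (p' j)" if "j \<in> {..<N}" for j
    using that dp dq dp' by (auto intro!: DERIV_continuous_on)
  obtain Bp where Bp: "0 \<le> Bp" "\<And>j s. j \<in> {..<N} \<Longrightarrow> s \<in> {t\<^sub>0..T} \<Longrightarrow> \<bar>p j s\<bar> \<le> Bp"
    using uniform_bound_continuous_family[of "{..<N}" "{t\<^sub>0..T}" p] cont(1) by blast
  obtain Bq where Bq: "0 \<le> Bq" "\<And>j s. j \<in> {..<N} \<Longrightarrow> s \<in> {t\<^sub>0..T} \<Longrightarrow> \<bar>q j s\<bar> \<le> Bq"
    using uniform_bound_continuous_family[of "{..<N}" "{t\<^sub>0..T}" q] cont(2) by blast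
  obtain B' where B': "0 \<le> B'" "\<And>j s. j \<in> {..<N} \<Longrightarrow> s \<in> {t\<^sub>0..T} \<Longrightarrow> \<bar>p' j s\<bar> \<le> B'"
    using uniform_bound_continuous_family[of "{..<N}" "{t\<^sub>0..T}" p'] cont(3) by blast
  have "0 \<le> p j s \<and> 0 \<le> q j s \<and> p j s + q j s \<le> 1" if "j < N" "s \<in> {t\<^sub>0..T}" for j s
    using sais_simplex_invariant[where B = "max Bp Bq", OF a _ _ _ _ _ _ dp dq _ that] assms(2-5,8)
      Bp Bq by fastforce
  then show "p i T \<le> p' i T"
    using sais_le_sis[OF a _ _ _ _ B'(1) _ dp dp'] assms(3,5,6,10) B'(2) \<open>i < N\<close> \<open>t\<^sub>0 \<le> T\<close>
    by fastforce
qed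

end
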